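(* Let $f:\mathbb{R}\times[0,1]\to\mathbb{R}$ be measurable, let $\mu_0\in\mathbb{R}$ be fixed, let $(\xi_t)_{t\ge 0}$ be independent random variables each uniformly distributed on $[0,1]$, and define $\mu_{t+1}=\mu_t+f(\mu_t,\xi_t)$ for $t\ge 0$. Let $F(\mu,x)=\mathbb{P}_{\xi\sim U([0,1])}(f(\mu,\xi)\le x)$ and $\bar f(\mu)=\mathbb{E}_{\xi\sim U([0,1])}[f(\mu,\xi)]$. Assume that $F$ is continuous at $(\mu,0)$ for every $\mu\in\mathbb{R}$, and that there exists $\mu_\circ\in\mathbb{R}$ such that $F(\mu,0)<1$ for all $\mu\ge\mu_\circ$ and $F(\mu,0)>0$ for all $\mu\le\mu_\circ$. Assume additionally that there exists $c\in\mathbb{R}$ such that $|\mu_{t+1}-\mu_t|\le c$ almost surely for all $t$, and that there exists $\epsilon>0$ such that $\bar f(\mu)>\epsilon$ for all sufficiently large $\mu$ and $\bar f(\mu)<-\epsilon$ for all sufficiently small (i.e. sufficiently negative) $\mu$. Then almost surely either $\lim_{t\to\infty}\mu_t=\infty$ or $\lim_{t\to\infty}\mu_t=-\infty$.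
   Context: $U([0,1])$ denotes the uniform distribution on $[0,1]$. The sequence $(\mu_t)$ models a user's interest in a fixed item over time; the conclusion is called strong degeneracy. *)

theory Defs
  imports "HOL-Probability.Probability"
begin

primrec proc :: "(real \<Rightarrow> real \<Rightarrow> real) \<Rightarrow> real \<Rightarrow> (nat \<Rightarrow> 'a \<Rightarrow> real) \<Rightarrow> nat \<Rightarrow> 'a \<Rightarrow> real" where
  "proc f m0 \<xi> 0 \<omega> = m0"
| "proc f m0 \<xi> (Suc t) \<omega> = proc f m0 \<xi> t \<omega> + f (proc f m0 \<xi> t \<omega>) (\<xi> t \<omega>)"

definition U01 :: "real measure" where
  "U01 = uniform_measure lborel {0..1}"

definition cdfF :: "(real \<Rightarrow> real \<Rightarrow> real) \<Rightarrow> real \<Rightarrow> real \<Rightarrow> real" where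
  "cdfF f m x = measure U01 {u \<in> space U01. f m u \<le> x}"

definition fbar :: "(real \<Rightarrow> real \<Rightarrow> real) \<Rightarrow> real \<Rightarrow> real" where
  "fbar f m = integral\<^sup>L U01 (\<lambda>u. f m u)"

end

theory Submission
  imports Defs
begin

(*
  The process is realised on the canonical space of i.i.d. uniform sequences, where it is
  a Markov chain. Replacing f by the rule of -mu_t reduces escape downwards to escape upwards.

  Above a level K the drift makes exp (-l mu_t) a supermartingale for small l > 0, so from
  any point above K + ln 2 / l the chain stays above K forever with probability >= 1/2.
  Continuity of F at (mu, 0) together with F(mu, 0) < 1 yields, uniformly on compact sets, an
  upward step of size >= delta with probability >= eta; hence from every point >= mu_o the
  chain reaches that height and then stays above K with probability bounded below. With the
  reflected argument: for every K there are N and q > 0 such that from any starting point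
  |mu_t| > K for all t >= N with probability >= q.

  By the Markov property a visit to [-K, K] at time r is, with probability >= q, followed by
  no visit after time r + N; a path makes at most N visits of this kind, so the probabilities
  of visits are summable and Borel-Cantelli gives |mu_t| -> infinity almost surely. Bounded
  increments then prevent the sign of mu_t from changing infinitely often.
*)

lemma exp_le_quadratic:
  fixes t :: real
  assumes "\<bar>t\<bar> \<le> 1"
  shows "exp t \<le> 1 + t + t\<^sup>2"
proof (cases "0 \<le> t")
  case True
  then show ?thesis using exp_bound[of t] assms by simp
next
  case False
  have "1 - t \<le> exp (- t)"
    using exp_ge_add_one_self[of "- t"] by simp
  then have "exp t \<le> 1 / (1 - t)"
    using False by (simp add: exp_minus field_simps)
  also have "\<dots> \<le> 1 + t + t\<^sup>2"
    using False assms mult_nonpos_nonneg[of t "t * t"] by (simp add: field_simps power2_eq_square)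
  finally show ?thesis .
qed

lemma emeasure_mult_le_nn_integral:
  assumes "D \<in> sets M" and "AE x in M. x \<in> D \<longrightarrow> p \<le> g x"
  shows "p * emeasure M D \<le> (\<integral>\<^sup>+ x. g x \<partial>M)"
proof -
  have "p * emeasure M D = (\<integral>\<^sup>+ x. p * indicator D x \<partial>M)"
    using assms(1) by (simp add: nn_integral_cmult_indicator)
  also have "\<dots> \<le> (\<integral>\<^sup>+ x. g x \<partial>M)"
    using assms(2)
    by (intro nn_integral_mono_AE) (auto elim!: eventually_mono split: split_indicator)
  finally show ?thesis .
qed

lemma emeasure_distr_pair_measure:
  assumes "pair_sigma_finite M1 M2" and g: "g \<in> measurable (M1 \<Otimes>\<^sub>M M2) N" and A: "A \<in> sets N"
  shows "emeasure (distr (M1 \<Otimes>\<^sub>M M2) N g) A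
    = (\<integral>\<^sup>+ x. emeasure M2 {y \<in> space M2. g (x, y) \<in> A} \<partial>M1)"
proof -
  interpret pair_sigma_finite M1 M2 by fact
  have "emeasure (distr (M1 \<Otimes>\<^sub>M M2) N g) A = emeasure (M1 \<Otimes>\<^sub>M M2) (g -` A \<inter> space (M1 \<Otimes>\<^sub>M M2))"
    by (rule emeasure_distr[OF g A])
  also have "\<dots> = (\<integral>\<^sup>+ x. emeasure M2 (Pair x -` (g -` A \<inter> space (M1 \<Otimes>\<^sub>M M2))) \<partial>M1)"
    by (rule M2.emeasure_pair_measure_alt) (rule measurable_sets[OF g A])
  also have "\<dots> = (\<integral>\<^sup>+ x. emeasure M2 {y \<in> space M2. g (x, y) \<in> A} \<partial>M1)"
    by (auto simp: space_pair_measure intro!: nn_integral_cong arg_cong[where f="emeasure M2"])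
  finally show ?thesis .
qed

lemma AE_distr_pair_measure:
  assumes "pair_sigma_finite M1 M2" and g: "g \<in> measurable (M1 \<Otimes>\<^sub>M M2) N"
    and "AE z in distr (M1 \<Otimes>\<^sub>M M2) N g. P z"
  shows "AE x in M1. AE y in M2. P (g (x, y))"
proof -
  interpret pair_sigma_finite M1 M2 by fact
  have "AE z in M1 \<Otimes>\<^sub>M M2. P (g z)"
    by (rule AE_distrD[OF g assms(3)])
  from AE_pair[OF this] show ?thesis by simp
qed

lemma card_sparse_le:
  assumes "\<And>r s. P r \<Longrightarrow> N \<le> s \<Longrightarrow> \<not> P (r + s)"
  shows "card {r\<in>{..<n}. P r} \<le> N"
proof (cases "{r\<in>{..<n}. P r} = {}")
  case False
  let ?R = "{r\<in>{..<n}. P r}"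
  have "?R \<subseteq> {Min ?R..<Min ?R + N}"
  proof
    fix r assume r: "r \<in> ?R"
    have "Min ?R \<in> ?R" "Min ?R \<le> r"
      using Min_in[OF _ False] Min_le[OF _ r] by auto
    with assms[of "Min ?R" "r - Min ?R"] r show "r \<in> {Min ?R..<Min ?R + N}"
      by force
  qed
  from card_mono[OF _ this] show ?thesis
    by simp
qed (metis card.empty le0)

lemma (in prob_space) sum_prob_le_if_card_le:
  fixes A :: "nat \<Rightarrow> 'a set"
  assumes A: "\<And>r. A r \<in> events" and card: "\<And>x. card {r\<in>{..<n}. x \<in> A r} \<le> N"
  shows "(\<Sum>r<n. prob (A r)) \<le> N"
proof -
  have "(\<Sum>r<n. prob (A r)) = expectation (\<lambda>x. \<Sum>r<n. indicator (A r) x)"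
    using A by (simp add: Bochner_Integration.integral_sum emeasure_eq_measure)
  also have "\<dots> \<le> expectation (\<lambda>x. real N)"
  proof (intro integral_mono)
    fix x
    have "(\<Sum>r<n. indicator (A r) x :: real) = (\<Sum>r<n. of_bool (x \<in> A r))"
      by (simp add: indicator_def)
    also have "\<dots> = card ({..<n} \<inter> {r. x \<in> A r})"
      by (rule sum_of_bool_eq) simp_all
    finally have "(\<Sum>r<n. indicator (A r) x :: real) = card {r\<in>{..<n}. x \<in> A r}"
      by (simp add: Collect_conj_eq lessThan_def)
    with card show "(\<Sum>r<n. indicator (A r) x) \<le> real N"
      by (metis of_nat_le_iff)
  qed (use A in \<open>auto simp: emeasure_eq_measure\<close>)
  finally show ?thesis
    by (simp add: prob_space)
qed

lemma uniformly_positive_near_zero: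
  fixes g :: "real \<Rightarrow> real \<Rightarrow> real"
  assumes cont: "\<And>x. x \<in> {a..b} \<Longrightarrow> isCont (\<lambda>p. g (fst p) (snd p)) (x, 0)"
    and pos: "\<And>x. x \<in> {a..b} \<Longrightarrow> 0 < g x 0"
  shows "\<exists>\<delta>>0. \<exists>\<eta>>0. \<forall>x\<in>{a..b}. \<eta> \<le> g x \<delta>"
proof (rule ccontr)
  assume "\<not> ?thesis"
  then have "\<exists>x\<in>{a..b}. g x (1 / Suc n) < 1 / Suc n" for n
    by (metis not_le of_nat_0_less_iff zero_less_Suc zero_less_divide_1_iff)
  then obtain X where X: "\<And>n. X n \<in> {a..b}" "\<And>n. g (X n) (1 / Suc n) < 1 / Suc n"
    by metis
  obtain x r where x: "x \<in> {a..b}" and r: "strict_mono r" and lim: "(X \<circ> r) \<longlonglongrightarrow> x"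
    using compact_Icc[unfolded compact_eq_seq_compact_metric seq_compact_def] X(1) by metis
  have zero: "(\<lambda>n. 1 / real (Suc (r n))) \<longlonglongrightarrow> 0"
    using LIMSEQ_subseq_LIMSEQ[OF LIMSEQ_inverse_real_of_nat r]
    by (simp add: o_def inverse_eq_divide)
  have "(\<lambda>n. g (X (r n)) (1 / Suc (r n))) \<longlonglongrightarrow> g x 0"
    using isCont_tendsto_compose[OF cont[OF x] tendsto_Pair[OF lim zero]] by (simp add: o_def)
  then have "g x 0 \<le> 0"
    using zero X(2) by (intro tendsto_le[OF trivial_limit_sequentially])
      (auto intro!: always_eventually less_imp_le)
  with pos[OF x] show False
    by simp
qed

lemma filterlim_at_top_or_at_bot_if_abs:
  fixes X :: "nat \<Rightarrow> real"
  assumes steps: "\<And>t. \<bar>X (Suc t) - X t\<bar> \<le> c" and abs: "filterlim (\<lambda>t. \<bar>X t\<bar>) at_top sequentially"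
  shows "filterlim X at_top sequentially \<or> filterlim X at_bot sequentially"
proof -
  obtain T where T: "\<And>t. T \<le> t \<Longrightarrow> c < \<bar>X t\<bar>"
    using abs[unfolded filterlim_at_top_dense] by (auto simp: eventually_sequentially)
  have sign: "0 < X t \<longleftrightarrow> 0 < X T" if "T \<le> t" for t
    using that
  proof (induction t rule: dec_induct)
    case (step t)
    have "0 < X (Suc t) \<longleftrightarrow> 0 < X t"
      using steps[of t] T[of t] T[of "Suc t"] step.hyps by linarith
    with step.IH show ?case
      by simp
  qed simp
  show ?thesis
  proof (cases "0 < X T")
    case True
    then have "\<forall>\<^sub>F t in sequentially. \<bar>X t\<bar> = X t"
      using sign unfolding eventually_sequentially by (metis abs_of_pos)
    with abs have "filterlim X at_top sequentially"
      by (simp add: filterlim_cong)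
    then show ?thesis ..
  next
    case False
    then have "\<forall>\<^sub>F t in sequentially. \<bar>X t\<bar> = - X t"
      using sign T unfolding eventually_sequentially by (metis abs_of_nonpos not_less)
    with abs have "filterlim (\<lambda>t. - X t) at_top sequentially"
      by (simp add: filterlim_cong)
    then show ?thesis
      by (simp add: filterlim_uminus_at_bot)
  qed
qed

subsection \<open>The canonical space of i.i.d. uniform sequences\<close>

lemma space_U01 [simp]: "space U01 = UNIV"
  unfolding U01_def by simp

lemma sets_U01 [simp, measurable_cong]: "sets U01 = sets borel"
  unfolding U01_def by simp

interpretation U01: prob_space U01
  unfolding U01_def by (rule prob_space_uniform_measure) auto

abbreviation U01_seq :: "(nat \<Rightarrow> real) measure" where
  "U01_seq \<equiv> PiM UNIV (\<lambda>_. U01)"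

interpretation U01_seq: sequence_space U01
  by unfold_locales

lemma space_U01_seq [simp]: "space U01_seq = UNIV"
  by (auto simp: space_PiM PiE_def extensional_def)

lemma sets_Collect_U01_seq [measurable (raw)]:
  "Measurable.pred U01_seq P \<Longrightarrow> {w. P w} \<in> sets U01_seq"
  by (simp add: pred_def)

lemma pair_sigma_finite_U01_seq:
  "pair_sigma_finite U01 U01_seq" "pair_sigma_finite U01_seq U01_seq"
  by (simp_all add: pair_sigma_finite_def U01.sigma_finite_measure_axioms
      U01_seq.sigma_finite_measure_axioms)

lemma measurable_case_nat_U01_seq [measurable]:
  "(\<lambda>(s, w). case_nat s w) \<in> measurable (U01 \<Otimes>\<^sub>M U01_seq) U01_seq"
  using measurable_case_nat'[OF measurable_fst measurable_snd] by (simp add: split_beta')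

lemma emeasure_U01_seq_case_nat:
  assumes "A \<in> sets U01_seq"
  shows "emeasure U01_seq A = (\<integral>\<^sup>+ s. emeasure U01_seq {w. case_nat s w \<in> A} \<partial>U01)"
proof -
  have "emeasure U01_seq A = emeasure (distr (U01 \<Otimes>\<^sub>M U01_seq) U01_seq (\<lambda>(s, w). case_nat s w)) A"
    by (simp add: U01_seq.PiM_iter)
  also have "\<dots> = (\<integral>\<^sup>+ s. emeasure U01_seq {w. case_nat s w \<in> A} \<partial>U01)"
    by (subst emeasure_distr_pair_measure) (simp_all add: assms pair_sigma_finite_U01_seq)
  finally show ?thesis .
qed

lemma emeasure_U01_seq_comb_seq:
  assumes "A \<in> sets U01_seq"
  shows "emeasure U01_seq A = (\<integral>\<^sup>+ w. emeasure U01_seq {w'. comb_seq r w w' \<in> A} \<partial>U01_seq)"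
proof -
  have "emeasure U01_seq A
      = emeasure (distr (U01_seq \<Otimes>\<^sub>M U01_seq) U01_seq (\<lambda>(w, w'). comb_seq r w w')) A"
    by (simp add: U01_seq.PiM_comb_seq)
  also have "\<dots> = (\<integral>\<^sup>+ w. emeasure U01_seq {w'. comb_seq r w w' \<in> A} \<partial>U01_seq)"
    by (subst emeasure_distr_pair_measure)
      (simp_all add: assms measurable_comb_seq pair_sigma_finite_U01_seq)
  finally show ?thesis .
qed

lemma AE_U01_seq_case_nat:
  assumes "AE w in U01_seq. P w"
  shows "AE s in U01. AE w in U01_seq. P (case_nat s w)"
proof -
  have "AE w in distr (U01 \<Otimes>\<^sub>M U01_seq) U01_seq (\<lambda>(s, w). case_nat s w). P w"
    by (simp only: U01_seq.PiM_iter assms)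
  from AE_distr_pair_measure[OF pair_sigma_finite_U01_seq(1) measurable_case_nat_U01_seq this]
  show ?thesis
    by simp
qed

lemma AE_U01_seq_comb_seq:
  assumes "AE w in U01_seq. P w"
  shows "AE w in U01_seq. AE w' in U01_seq. P (comb_seq r w w')"
proof -
  have "AE w in distr (U01_seq \<Otimes>\<^sub>M U01_seq) U01_seq (\<lambda>(w, w'). comb_seq r w w'). P w"
    by (simp only: U01_seq.PiM_comb_seq assms)
  from AE_distr_pair_measure[OF pair_sigma_finite_U01_seq(2) measurable_comb_seq this]
  show ?thesis
    by simp
qed

lemma distr_U01_seq_iid:
  assumes "prob_space M"
    and rv: "\<And>t. \<xi> t \<in> borel_measurable M" and indep: "prob_space.indep_vars M (\<lambda>_. borel) \<xi> UNIV"
    and unif: "\<And>t. distr M borel (\<xi> t) = U01"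
  shows "(\<lambda>\<omega> t. \<xi> t \<omega>) \<in> measurable M U01_seq" and "distr M U01_seq (\<lambda>\<omega> t. \<xi> t \<omega>) = U01_seq"
proof -
  have sets_eq: "sets U01_seq = sets (PiM UNIV (\<lambda>_. borel :: real measure))"
    by (rule sets_PiM_cong) auto
  have "(\<lambda>\<omega> t. \<xi> t \<omega>) \<in> measurable M (PiM UNIV (\<lambda>_. borel))"
    using rv by (intro measurable_PiM_single') (auto simp: space_PiM)
  then show "(\<lambda>\<omega> t. \<xi> t \<omega>) \<in> measurable M U01_seq"
    by (simp add: measurable_cong_sets[OF refl sets_eq])
  have "distr M U01_seq (\<lambda>\<omega> t. \<xi> t \<omega>) = distr M (PiM UNIV (\<lambda>_. borel)) (\<lambda>\<omega>. \<lambda>t\<in>UNIV. \<xi> t \<omega>)"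
    by (rule distr_cong) (simp_all add: sets_eq restrict_def)
  also have "\<dots> = PiM UNIV (\<lambda>t. distr M borel (\<xi> t))"
    using prob_space.indep_vars_iff_distr_eq_PiM[OF assms(1), where X=\<xi> and I=UNIV
        and M'="\<lambda>_. borel"] indep rv
    by simp
  finally show "distr M U01_seq (\<lambda>\<omega> t. \<xi> t \<omega>) = U01_seq"
    by (simp add: unif)
qed

primrec traj :: "(real \<Rightarrow> real \<Rightarrow> real) \<Rightarrow> real \<Rightarrow> (nat \<Rightarrow> real) \<Rightarrow> nat \<Rightarrow> real" where
  "traj f x w 0 = x"
| "traj f x w (Suc n) = traj f x w n + f (traj f x w n) (w n)"

lemma proc_eq_traj: "proc f m0 \<xi> t \<omega> = traj f m0 (\<lambda>i. \<xi> i \<omega>) t"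
  by (induction t) auto

lemma traj_case_nat_Suc: "traj f x (case_nat s w) (Suc n) = traj f (x + f x s) w n"
  by (induction n) auto

lemma traj_comb_seq_le: "n \<le> r \<Longrightarrow> traj f x (comb_seq r w w') n = traj f x w n"
  by (induction n) (auto simp: comb_seq_less)

lemma traj_comb_seq_add: "traj f x (comb_seq r w w') (r + n) = traj f (traj f x w r) w' n"
proof (induction n)
  case (Suc n)
  have "comb_seq r w w' (r + n) = w' n"
    using comb_seq_add[of r w w' n] by (simp add: add.commute)
  with Suc show ?case by simp
qed (simp add: traj_comb_seq_le)

definition mirror_update :: "(real \<Rightarrow> real \<Rightarrow> real) \<Rightarrow> real \<Rightarrow> real \<Rightarrow> real" where
  "mirror_update f m u = - f (- m) u"

lemma traj_mirror: "traj (mirror_update f) (- x) w n = - traj f x w n"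
  by (induction n) (auto simp: mirror_update_def)

lemma fbar_mirror: "fbar (mirror_update f) m = - fbar f (- m)"
  unfolding fbar_def mirror_update_def by simp

(* A property of the starting point, so that it is inherited by the chain restarted at any
   later time (bounded_steps_traj). *)
definition bounded_steps :: "(real \<Rightarrow> real \<Rightarrow> real) \<Rightarrow> real \<Rightarrow> real \<Rightarrow> bool" where
  "bounded_steps f c x \<longleftrightarrow> (AE w in U01_seq. \<forall>t. \<bar>f (traj f x w t) (w t)\<bar> \<le> c)"

lemma bounded_steps_case_nat:
  assumes "bounded_steps f c x"
  shows "AE s in U01. \<bar>f x s\<bar> \<le> c \<and> bounded_steps f c (x + f x s)"
  using AE_U01_seq_case_nat[OF assms[unfolded bounded_steps_def]]
proof (rule eventually_mono)
  fix s
  assume steps: "AE w in U01_seq. \<forall>t. \<bar>f (traj f x (case_nat s w) t) (case_nat s w t)\<bar> \<le> c"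
  have "AE w in U01_seq. \<bar>f x s\<bar> \<le> c"
    using steps by (rule eventually_mono) (metis traj.simps(1) nat.simps(4))
  moreover have "AE w in U01_seq. \<forall>t. \<bar>f (traj f (x + f x s) w t) (w t)\<bar> \<le> c"
    using steps by (rule eventually_mono) (metis traj_case_nat_Suc nat.simps(5))
  ultimately show "\<bar>f x s\<bar> \<le> c \<and> bounded_steps f c (x + f x s)"
    by (simp add: U01_seq.P.AE_const bounded_steps_def)
qed

lemma bounded_steps_traj:
  assumes "bounded_steps f c x"
  shows "AE w in U01_seq. bounded_steps f c (traj f x w r)"
  using AE_U01_seq_comb_seq[OF assms[unfolded bounded_steps_def], of r]
proof (rule eventually_mono)
  fix w
  assume "AE w' in U01_seq. \<forall>t. \<bar>f (traj f x (comb_seq r w w') t) (comb_seq r w w' t)\<bar> \<le> c"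
  then show "bounded_steps f c (traj f x w r)"
    unfolding bounded_steps_def
    by (rule eventually_mono) (metis traj_comb_seq_add comb_seq_add add.commute)
qed

lemma bounded_steps_mirror: "bounded_steps f c x \<Longrightarrow> bounded_steps (mirror_update f) c (- x)"
  by (simp add: bounded_steps_def traj_mirror) (simp add: mirror_update_def)

definition climb_event :: "(real \<Rightarrow> real \<Rightarrow> real) \<Rightarrow> real \<Rightarrow> real \<Rightarrow> nat \<Rightarrow> real \<Rightarrow> (nat \<Rightarrow> real) set" where
  "climb_event f K' K n x = {w. \<exists>r\<le>n. K' \<le> traj f x w r \<and> (\<forall>s\<ge>r. K < traj f x w s)}"

lemma climb_event_mono: "m \<le> n \<Longrightarrow> climb_event f K' K m x \<subseteq> climb_event f K' K n x"
  unfolding climb_event_def by (auto intro: order_trans)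

lemma climb_event_case_nat:
  "climb_event f K' K n (x + f x s) \<subseteq> {w. case_nat s w \<in> climb_event f K' K (Suc n) x}"
proof
  fix w assume "w \<in> climb_event f K' K n (x + f x s)"
  then obtain r where r: "r \<le> n" "K' \<le> traj f (x + f x s) w r" "\<forall>t\<ge>r. K < traj f (x + f x s) w t"
    by (auto simp: climb_event_def)
  have "\<forall>t\<ge>Suc r. K < traj f x (case_nat s w) t"
  proof (intro allI impI)
    fix t assume "Suc r \<le> t"
    then obtain t' where "t = Suc t'" "r \<le> t'"
      by (cases t) auto
    with r(3) show "K < traj f x (case_nat s w) t"
      by (simp only: traj_case_nat_Suc)
  qed
  with r(1,2) show "w \<in> {w. case_nat s w \<in> climb_event f K' K (Suc n) x}"
    unfolding climb_event_def
    by (auto intro!: exI[of _ "Suc r"] simp: traj_case_nat_Suc simp del: traj.simps(2))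
qed

definition uniform_escape :: "(real \<Rightarrow> real \<Rightarrow> real) \<Rightarrow> real \<Rightarrow> real \<Rightarrow> bool" where
  "uniform_escape f c K \<longleftrightarrow> (\<exists>N q. 0 < q \<and>
     (\<forall>x. bounded_steps f c x \<longrightarrow> q \<le> measure U01_seq {w. \<forall>t\<ge>N. K < \<bar>traj f x w t\<bar>}))"

subsection \<open>Escape to infinity for a measurable update rule\<close>

locale measurable_step =
  fixes f :: "real \<Rightarrow> real \<Rightarrow> real"
  assumes measurable_f: "(\<lambda>(m, u). f m u) \<in> borel_measurable borel"
begin

lemma measurable_f_comp [measurable (raw)]:
  assumes [measurable]: "a \<in> borel_measurable N" "b \<in> borel_measurable N"
  shows "(\<lambda>z. f (a z) (b z)) \<in> borel_measurable N"
proof -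
  have "(\<lambda>z. (a z, b z)) \<in> measurable N borel"
    by (simp flip: borel_prod)
  from measurable_compose[OF this measurable_f] show ?thesis by simp
qed

lemma measurable_traj [measurable (raw)]:
  assumes [measurable]: "x \<in> borel_measurable N" "w \<in> measurable N U01_seq"
  shows "(\<lambda>z. traj f (x z) (w z) n) \<in> borel_measurable N"
proof (induction n)
  case (Suc n)
  have "(\<lambda>z. w z n) \<in> measurable N U01"
    by (rule measurable_compose[OF assms(2) measurable_component_singleton]) simp
  then have [measurable]: "(\<lambda>z. w z n) \<in> borel_measurable N"
    by (simp add: measurable_cong_sets[OF refl sets_U01])
  from Suc show ?case by simp
qed simp

lemma measurable_step_mirror: "measurable_step (mirror_update f)"
proof
  have "(\<lambda>p. - f (- fst p) (snd p)) \<in> borel_measurable (borel \<Otimes>\<^sub>M borel :: (real \<times> real) measure)"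
    by measurable
  then show "(\<lambda>(m, u). mirror_update f m u) \<in> borel_measurable borel"
    by (simp add: split_beta' mirror_update_def borel_prod)
qed

lemma nn_integral_exp_step_le_1:
  assumes bounded: "AE s in U01. \<bar>f y s\<bar> \<le> c" and drift: "\<epsilon> \<le> fbar f y"
    and l: "0 \<le> l" "l * c \<le> 1" "l * c\<^sup>2 \<le> \<epsilon>"
  shows "(\<integral>\<^sup>+ s. ennreal (exp (- l * f y s)) \<partial>U01) \<le> 1"
proof -
  have int: "integrable U01 (f y)"
    by (rule U01.integrable_const_bound[where B=c]) (use bounded in auto)
  have exp_le: "exp (- l * f y s) \<le> 1 - l * f y s + l\<^sup>2 * c\<^sup>2" if "\<bar>f y s\<bar> \<le> c" for s
  proof -
    have "\<bar>l * f y s\<bar> \<le> l * c"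
      using that l by (simp add: abs_mult mult_left_mono)
    then have "\<bar>- l * f y s\<bar> \<le> 1" and "(- l * f y s)\<^sup>2 \<le> l\<^sup>2 * c\<^sup>2"
      using l by (auto simp: power_mult_distrib[symmetric] power2_le_iff_abs_le)
    with exp_le_quadratic[of "- l * f y s"] show ?thesis by simp
  qed
  have "(\<integral>\<^sup>+ s. ennreal (exp (- l * f y s)) \<partial>U01)
      \<le> (\<integral>\<^sup>+ s. ennreal (1 - l * f y s + l\<^sup>2 * c\<^sup>2) \<partial>U01)"
    using bounded by (intro nn_integral_mono_AE) (elim eventually_mono, intro ennreal_leI exp_le)
  also have "\<dots> = ennreal (\<integral> s. (1 - l * f y s + l\<^sup>2 * c\<^sup>2) \<partial>U01)"
    using int bounded
    by (intro nn_integral_eq_integral)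
      (auto elim!: eventually_mono intro!: order_trans[OF _ exp_le])
  also have "(\<integral> s. (1 - l * f y s + l\<^sup>2 * c\<^sup>2) \<partial>U01) = 1 - l * fbar f y + l\<^sup>2 * c\<^sup>2"
    using int U01.prob_space unfolding fbar_def by simp
  also have "ennreal (1 - l * fbar f y + l\<^sup>2 * c\<^sup>2) \<le> 1"
    using mult_left_mono[OF order_trans[OF l(3) drift] l(1)]
    by (simp add: power2_eq_square algebra_simps)
  finally show ?thesis .
qed

(* exp (- l (mu_t - K)) is a supermartingale as long as mu_t stays above K. *)
lemma emeasure_hits_below_le:
  assumes drift: "\<forall>y\<ge>K. \<epsilon> \<le> fbar f y" and l: "0 \<le> l" "l * c \<le> 1" "l * c\<^sup>2 \<le> \<epsilon>"
  shows "bounded_steps f c y \<Longrightarrow> emeasure U01_seq {w. \<exists>t<n. traj f y w t \<le> K} \<le> exp (- l * (y - K))"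
proof (induction n arbitrary: y)
  case (Suc n)
  show ?case
  proof (cases "y \<le> K")
    case True
    have "emeasure U01_seq {w. \<exists>t<Suc n. traj f y w t \<le> K} \<le> 1"
      by (rule U01_seq.P.emeasure_le_1)
    also have "\<dots> \<le> exp (- l * (y - K))"
      using True l by (simp add: mult_nonneg_nonpos)
    finally show ?thesis .
  next
    case False
    have bounded: "AE s in U01. \<bar>f y s\<bar> \<le> c \<and> bounded_steps f c (y + f y s)"
      by (rule bounded_steps_case_nat[OF Suc.prems])
    have "emeasure U01_seq {w. \<exists>t<Suc n. traj f y w t \<le> K}
        = (\<integral>\<^sup>+ s. emeasure U01_seq {w. \<exists>t<n. traj f (y + f y s) w t \<le> K} \<partial>U01)"
      using False by (subst emeasure_U01_seq_case_nat)
        (simp_all add: Ex_less_Suc2 traj_case_nat_Suc del: traj.simps(2))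
    also have "\<dots> \<le> (\<integral>\<^sup>+ s. ennreal (exp (- l * (y - K))) * ennreal (exp (- l * f y s)) \<partial>U01)"
      using bounded
    proof (intro nn_integral_mono_AE, elim eventually_mono, elim conjE)
      fix s assume "bounded_steps f c (y + f y s)"
      from Suc.IH[OF this]
      show "emeasure U01_seq {w. \<exists>t<n. traj f (y + f y s) w t \<le> K}
          \<le> ennreal (exp (- l * (y - K))) * ennreal (exp (- l * f y s))"
        by (simp add: ennreal_mult[symmetric] exp_add[symmetric] algebra_simps)
    qed
    also have "\<dots> = ennreal (exp (- l * (y - K))) * (\<integral>\<^sup>+ s. ennreal (exp (- l * f y s)) \<partial>U01)"
      by (rule nn_integral_cmult) measurable
    also have "\<dots> \<le> ennreal (exp (- l * (y - K))) * 1"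
      using nn_integral_exp_step_le_1[OF _ _ l] bounded False drift
      by (intro mult_left_mono) (auto elim!: eventually_mono)
    finally show ?thesis by simp
  qed
qed simp

lemma prob_stays_above:
  assumes drift: "\<forall>y\<ge>K. \<epsilon> \<le> fbar f y" and l: "0 < l" "l * c \<le> 1" "l * c\<^sup>2 \<le> \<epsilon>"
    and y: "bounded_steps f c y" "K + ln 2 / l \<le> y"
  shows "1 / 2 \<le> measure U01_seq {w. \<forall>t. K < traj f y w t}"
proof -
  let ?hit = "\<lambda>n. {w. \<exists>t<n. traj f y w t \<le> K}"
  have "?hit n \<in> sets U01_seq" for n
    by measurable
  moreover have "incseq ?hit"
    unfolding incseq_def by (blast intro: order.strict_trans2)
  moreover have "{w. \<exists>t. traj f y w t \<le> K} = (\<Union>n. ?hit n)"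
    by blast
  ultimately have "emeasure U01_seq {w. \<exists>t. traj f y w t \<le> K} = (SUP n. emeasure U01_seq (?hit n))"
    by (auto intro!: SUP_emeasure_incseq[symmetric])
  also have "\<dots> \<le> exp (- l * (y - K))"
    using l y by (intro SUP_least emeasure_hits_below_le[OF drift]) auto
  also have "ennreal (exp (- l * (y - K))) \<le> ennreal (1 / 2)"
    using y(2) l exp_le_cancel_iff[of "- l * (y - K)" "- ln 2"]
    by (intro ennreal_leI) (simp add: field_simps exp_minus)
  finally have "measure U01_seq {w. \<exists>t. traj f y w t \<le> K} \<le> 1 / 2"
    by (subst (asm) U01_seq.P.emeasure_eq_measure, subst (asm) ennreal_le_iff) auto
  moreover have "{w. \<forall>t. K < traj f y w t} = space U01_seq - {w. \<exists>t. traj f y w t \<le> K}"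
    by (auto simp flip: not_le)
  moreover have "{w. \<exists>t. traj f y w t \<le> K} \<in> sets U01_seq"
    by measurable
  note U01_seq.P.prob_compl[OF this]
  ultimately show ?thesis
    by simp
qed

lemma sets_climb_event [measurable]: "climb_event f K' K n x \<in> sets U01_seq"
  unfolding climb_event_def by measurable

lemma emeasure_climb_event_ge_half:
  assumes "1 / 2 \<le> measure U01_seq {w. \<forall>t. K < traj f x w t}" and "K' \<le> x"
  shows "ennreal (1 / 2) \<le> emeasure U01_seq (climb_event f K' K n x)"
proof -
  have "emeasure U01_seq (climb_event f K' K 0 x) = measure U01_seq {w. \<forall>t. K < traj f x w t}"
    using assms(2) by (simp add: climb_event_def U01_seq.P.emeasure_eq_measure)
  then have "ennreal (1 / 2) \<le> emeasure U01_seq (climb_event f K' K 0 x)"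
    using ennreal_leI[OF assms(1)] by simp
  also have "\<dots> \<le> emeasure U01_seq (climb_event f K' K n x)"
    by (intro emeasure_mono climb_event_mono) auto
  finally show ?thesis .
qed

lemma emeasure_climb_event_ge:
  assumes stay: "\<And>y. bounded_steps f c y \<Longrightarrow> K' \<le> y
      \<Longrightarrow> 1 / 2 \<le> measure U01_seq {w. \<forall>t. K < traj f y w t}"
    and climb: "\<And>x. a \<le> x \<Longrightarrow> x < K' \<Longrightarrow> \<eta> \<le> measure U01 {s. \<delta> \<le> f x s}"
    and \<delta>: "0 < \<delta>" and \<eta>: "0 \<le> \<eta>" "\<eta> \<le> 1"
  shows "bounded_steps f c x \<Longrightarrow> a \<le> x \<Longrightarrow> K' - n * \<delta> \<le> x
    \<Longrightarrow> ennreal (\<eta> ^ n / 2) \<le> emeasure U01_seq (climb_event f K' K n x)"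
proof (induction n arbitrary: x)
  case 0
  then have "K' \<le> x"
    by simp
  with 0 stay show ?case
    by (simp only: power_0 emeasure_climb_event_ge_half)
next
  case (Suc n)
  show ?case
  proof (cases "K' \<le> x")
    case True
    have "ennreal (\<eta> ^ Suc n / 2) \<le> ennreal (1 / 2)"
      using \<eta> by (intro ennreal_leI divide_right_mono power_le_one) auto
    also have "\<dots> \<le> emeasure U01_seq (climb_event f K' K (Suc n) x)"
      using Suc.prems(1) True by (intro emeasure_climb_event_ge_half stay)
    finally show ?thesis .
  next
    case False
    let ?up = "{s. \<delta> \<le> f x s}"
    let ?climb = "climb_event f K' K (Suc n) x"
    have "\<eta> ^ Suc n / 2 = \<eta> ^ n / 2 * \<eta>"
      by simp
    also have "ennreal (\<eta> ^ n / 2 * \<eta>) \<le> ennreal (\<eta> ^ n / 2) * emeasure U01 ?up"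
      unfolding U01.emeasure_eq_measure using climb[OF Suc.prems(2)] False \<eta>
      by (subst ennreal_mult[symmetric]) (auto intro!: ennreal_leI mult_left_mono)
    also have "\<dots> \<le> (\<integral>\<^sup>+ s. emeasure U01_seq {w. case_nat s w \<in> ?climb} \<partial>U01)"
      using bounded_steps_case_nat[OF Suc.prems(1)]
    proof (intro emeasure_mult_le_nn_integral, measurable, elim eventually_mono, intro impI)
      fix s assume s: "\<bar>f x s\<bar> \<le> c \<and> bounded_steps f c (x + f x s)" "s \<in> ?up"
      have "ennreal (\<eta> ^ n / 2) \<le> emeasure U01_seq (climb_event f K' K n (x + f x s))"
        using s Suc.prems(2,3) \<delta> by (intro Suc.IH) (auto simp: algebra_simps)
      also have "\<dots> \<le> emeasure U01_seq {w. case_nat s w \<in> ?climb}"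
        by (intro emeasure_mono climb_event_case_nat) measurable
      finally show "ennreal (\<eta> ^ n / 2) \<le> emeasure U01_seq {w. case_nat s w \<in> ?climb}" .
    qed
    also have "\<dots> = emeasure U01_seq ?climb"
      by (simp add: emeasure_U01_seq_case_nat[symmetric])
    finally show ?thesis .
  qed
qed

lemma escape_up:
  assumes c: "0 < c" and \<epsilon>: "0 < \<epsilon>" and drift: "\<forall>y\<ge>K. \<epsilon> \<le> fbar f y"
    and climb: "\<And>b. \<exists>\<delta>>0. \<exists>\<eta>>0. \<forall>x\<in>{a..b}. \<eta> \<le> measure U01 {s. \<delta> \<le> f x s}"
  shows "\<exists>N q. 0 < q \<and> (\<forall>x. bounded_steps f c x \<longrightarrow> a \<le> x \<longrightarrow>
           q \<le> measure U01_seq {w. \<forall>t\<ge>N. K < traj f x w t})"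
proof -
  define l where "l = min (1 / c) (\<epsilon> / c\<^sup>2)"
  have l: "0 < l" "l * c \<le> 1" "l * c\<^sup>2 \<le> \<epsilon>"
    using c \<epsilon> by (auto simp: l_def min_def field_simps)
  define K' where "K' = K + ln 2 / l"
  obtain \<delta> \<eta> where \<delta>: "0 < \<delta>" and \<eta>: "0 < \<eta>"
    and up: "\<forall>x\<in>{a..K'}. \<eta> \<le> measure U01 {s. \<delta> \<le> f x s}"
    using climb by blast
  define N where "N = nat \<lceil>(K' - a) / \<delta>\<rceil>"
  have climb_event_ge: "ennreal (min \<eta> 1 ^ N / 2) \<le> emeasure U01_seq (climb_event f K' K N x)"
    if "bounded_steps f c x" "a \<le> x" for x
  proof (rule emeasure_climb_event_ge[OF _ _ \<delta> _ _ that])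
    show "1 / 2 \<le> measure U01_seq {w. \<forall>t. K < traj f y w t}" if "bounded_steps f c y" "K' \<le> y" for y
      using that by (intro prob_stays_above[OF drift l]) (auto simp: K'_def)
    show "min \<eta> 1 \<le> measure U01 {s. \<delta> \<le> f x s}" if "a \<le> x" "x < K'" for x
      using up that by (auto simp: min_le_iff_disj)
    have "(K' - a) / \<delta> \<le> real N"
      unfolding N_def by linarith
    with \<delta> that(2) show "K' - real N * \<delta> \<le> x"
      by (simp add: field_simps)
  qed (use \<eta> in auto)
  show ?thesis
  proof (intro exI conjI allI impI)
    fix x assume x: "bounded_steps f c x" "a \<le> x"
    have "climb_event f K' K N x \<subseteq> {w. \<forall>t\<ge>N. K < traj f x w t}"
      unfolding climb_event_def by (auto intro: order_trans)
    then have "emeasure U01_seq (climb_event f K' K N x)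
        \<le> emeasure U01_seq {w. \<forall>t\<ge>N. K < traj f x w t}"
      by (intro emeasure_mono) measurable
    with climb_event_ge[OF x] show "min \<eta> 1 ^ N / 2 \<le> measure U01_seq {w. \<forall>t\<ge>N. K < traj f x w t}"
      using \<eta> by (simp add: U01_seq.P.emeasure_eq_measure ennreal_le_iff)
  qed (use \<eta> in simp)
qed

lemma climb_condition_up:
  assumes cont: "\<And>m. isCont (\<lambda>p. cdfF f (fst p) (snd p)) (m, 0)"
    and below_1: "\<forall>m\<ge>a. cdfF f m 0 < 1"
  shows "\<exists>\<delta>>0. \<exists>\<eta>>0. \<forall>x\<in>{a..b}. \<eta> \<le> measure U01 {s. \<delta> \<le> f x s}"
proof -
  obtain \<delta> \<eta> where "0 < \<delta>" "0 < \<eta>" and gap: "\<forall>x\<in>{a..b}. \<eta> \<le> 1 - cdfF f x \<delta>"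
    using uniformly_positive_near_zero[of a b "\<lambda>x d. 1 - cdfF f x d"] cont below_1
    by (auto intro!: continuous_intros)
  have "1 - cdfF f x \<delta> \<le> measure U01 {s. \<delta> \<le> f x s}" for x
  proof -
    have "{s. f x s \<le> \<delta>} \<in> sets U01"
      by measurable
    from U01.prob_compl[OF this]
    have "1 - cdfF f x \<delta> = measure U01 (space U01 - {s. f x s \<le> \<delta>})"
      by (simp add: cdfF_def)
    also have "\<dots> \<le> measure U01 {s. \<delta> \<le> f x s}"
      by (rule U01.finite_measure_mono) auto
    finally show ?thesis .
  qed
  with gap \<open>0 < \<delta>\<close> \<open>0 < \<eta>\<close> show ?thesis
    by (meson order_trans)
qed

lemma climb_condition_down:
  assumes cont: "\<And>m. isCont (\<lambda>p. cdfF f (fst p) (snd p)) (m, 0)"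
    and above_0: "\<forall>m\<le>a. 0 < cdfF f m 0"
  shows "\<exists>\<delta>>0. \<exists>\<eta>>0. \<forall>x\<in>{- a..b}. \<eta> \<le> measure U01 {s. \<delta> \<le> mirror_update f x s}"
proof -
  have "isCont (\<lambda>p. cdfF f (fst p) (- snd p)) (m, 0)" for m
  proof -
    have "isCont (\<lambda>p::real \<times> real. (fst p, - snd p)) (m, 0)"
      by (intro continuous_intros)
    moreover have "isCont (\<lambda>p. cdfF f (fst p) (snd p)) ((\<lambda>p. (fst p, - snd p)) (m, 0))"
      using cont[of m] by simp
    ultimately show ?thesis
      using isCont_o2 by fastforce
  qed
  with above_0 obtain \<delta> \<eta> where "0 < \<delta>" "0 < \<eta>" and gap: "\<forall>y\<in>{- b..a}. \<eta> \<le> cdfF f y (- \<delta>)"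
    using uniformly_positive_near_zero[of "- b" a "\<lambda>y d. cdfF f y (- d)"] by auto
  have "cdfF f (- x) (- \<delta>) = measure U01 {s. \<delta> \<le> mirror_update f x s}" for x
    unfolding cdfF_def mirror_update_def by (simp add: le_minus_iff)
  with gap \<open>0 < \<delta>\<close> \<open>0 < \<eta>\<close> show ?thesis
    by (metis atLeastAtMost_iff minus_le_iff neg_le_iff_le)
qed

lemma escape_down:
  assumes c: "0 < c" and \<epsilon>: "0 < \<epsilon>" and drift: "\<forall>y\<le>- K. fbar f y \<le> - \<epsilon>"
    and climb: "\<And>b. \<exists>\<delta>>0. \<exists>\<eta>>0. \<forall>x\<in>{- a..b}. \<eta> \<le> measure U01 {s. \<delta> \<le> mirror_update f x s}"
  shows "\<exists>N q. 0 < q \<and> (\<forall>x. bounded_steps f c x \<longrightarrow> x \<le> a \<longrightarrow>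
           q \<le> measure U01_seq {w. \<forall>t\<ge>N. traj f x w t < - K})"
proof -
  interpret mirrored: measurable_step "mirror_update f"
    by (rule measurable_step_mirror)
  have "\<forall>y\<ge>K. \<epsilon> \<le> fbar (mirror_update f) y"
    using drift by (auto simp: fbar_mirror le_minus_iff)
  then obtain N q where "0 < q"
    and up: "\<forall>x. bounded_steps (mirror_update f) c x \<longrightarrow> - a \<le> x \<longrightarrow>
               q \<le> measure U01_seq {w. \<forall>t\<ge>N. K < traj (mirror_update f) x w t}"
    using mirrored.escape_up[OF c \<epsilon> _ climb] by blast
  show ?thesis
  proof (intro exI conjI allI impI)
    fix x assume "bounded_steps f c x" "x \<le> a"
    with up[rule_format, of "- x"] show "q \<le> measure U01_seq {w. \<forall>t\<ge>N. traj f x w t < - K}"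
      by (simp add: bounded_steps_mirror traj_mirror less_minus_iff)
  qed fact
qed

lemma uniform_escape_if_drift:
  assumes c: "0 < c" and \<epsilon>: "0 < \<epsilon>"
    and drift_top: "\<forall>\<^sub>F m in at_top. \<epsilon> < fbar f m" and drift_bot: "\<forall>\<^sub>F m in at_bot. fbar f m < - \<epsilon>"
    and cont: "\<And>m. isCont (\<lambda>p. cdfF f (fst p) (snd p)) (m, 0)"
    and below_1: "\<forall>m\<ge>mc. cdfF f m 0 < 1" and above_0: "\<forall>m\<le>mc. 0 < cdfF f m 0"
  shows "uniform_escape f c K"
proof -
  obtain K' where K': "K \<le> K'" and top: "\<forall>y\<ge>K'. \<epsilon> \<le> fbar f y" and bot: "\<forall>y\<le>- K'. fbar f y \<le> - \<epsilon>"
  proof -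
    obtain Kt Kb where "\<forall>y\<ge>Kt. \<epsilon> < fbar f y" "\<forall>y\<le>Kb. fbar f y < - \<epsilon>"
      using drift_top drift_bot
      by (auto simp: eventually_at_top_linorder eventually_at_bot_linorder)
    moreover have "y \<le> - max K (max Kt (- Kb)) \<Longrightarrow> y \<le> Kb" for y
      by linarith
    ultimately show ?thesis
      by (intro that[of "max K (max Kt (- Kb))"]) (auto intro: less_imp_le)
  qed
  obtain N1 q1 where "0 < q1"
    and up: "\<forall>x. bounded_steps f c x \<longrightarrow> mc \<le> x \<longrightarrow>
               q1 \<le> measure U01_seq {w. \<forall>t\<ge>N1. K' < traj f x w t}"
    using escape_up[OF c \<epsilon> top climb_condition_up[OF cont below_1]] by blast
  obtain N2 q2 where "0 < q2"
    and down: "\<forall>x. bounded_steps f c x \<longrightarrow> x \<le> mc \<longrightarrow>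
                 q2 \<le> measure U01_seq {w. \<forall>t\<ge>N2. traj f x w t < - K'}"
    using escape_down[OF c \<epsilon> bot climb_condition_down[OF cont above_0]] by blast
  show ?thesis
    unfolding uniform_escape_def
  proof (intro exI conjI allI impI)
    fix x assume x: "bounded_steps f c x"
    let ?escape = "{w. \<forall>t\<ge>max N1 N2. K < \<bar>traj f x w t\<bar>}"
    show "min q1 q2 \<le> measure U01_seq ?escape"
    proof (cases "mc \<le> x")
      case True
      with up x have "q1 \<le> measure U01_seq {w. \<forall>t\<ge>N1. K' < traj f x w t}"
        by blast
      also have "\<dots> \<le> measure U01_seq ?escape"
        using K' by (intro U01_seq.P.finite_measure_mono) (force, measurable)
      finally show ?thesis
        by simp
    next
      case False
      with down x have "q2 \<le> measure U01_seq {w. \<forall>t\<ge>N2. traj f x w t < - K'}"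
        by simp
      also have "\<dots> \<le> measure U01_seq ?escape"
        using K' by (intro U01_seq.P.finite_measure_mono) (force, measurable)
      finally show ?thesis
        by simp
    qed
  qed (use \<open>0 < q1\<close> \<open>0 < q2\<close> in simp)
qed

lemma prob_last_visit_ge:
  assumes bounded: "bounded_steps f c x0"
    and escape: "\<And>x. bounded_steps f c x \<Longrightarrow> q \<le> measure U01_seq {w. \<forall>t\<ge>N. K < \<bar>traj f x w t\<bar>}"
    and q: "0 \<le> q"
  shows "q * measure U01_seq {w. \<bar>traj f x0 w r\<bar> \<le> K}
    \<le> measure U01_seq {w. \<bar>traj f x0 w r\<bar> \<le> K \<and> (\<forall>t\<ge>N. K < \<bar>traj f x0 w (r + t)\<bar>)}"
proof -
  let ?last = "{w. \<bar>traj f x0 w r\<bar> \<le> K \<and> (\<forall>t\<ge>N. K < \<bar>traj f x0 w (r + t)\<bar>)}"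
  have "ennreal q * emeasure U01_seq {w. \<bar>traj f x0 w r\<bar> \<le> K}
      \<le> (\<integral>\<^sup>+ w. emeasure U01_seq {w'. comb_seq r w w' \<in> ?last} \<partial>U01_seq)"
    using bounded_steps_traj[OF bounded, of r]
  proof (intro emeasure_mult_le_nn_integral, measurable, elim eventually_mono, intro impI)
    fix w assume "bounded_steps f c (traj f x0 w r)" "w \<in> {w. \<bar>traj f x0 w r\<bar> \<le> K}"
    moreover have "{w'. comb_seq r w w' \<in> ?last} = {w'. \<forall>t\<ge>N. K < \<bar>traj f (traj f x0 w r) w' t\<bar>}"
      if "\<bar>traj f x0 w r\<bar> \<le> K"
      using that by (auto simp: traj_comb_seq_le traj_comb_seq_add)
    ultimately show "ennreal q \<le> emeasure U01_seq {w'. comb_seq r w w' \<in> ?last}"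
      using escape by (simp add: U01_seq.P.emeasure_eq_measure)
  qed
  also have "\<dots> = emeasure U01_seq ?last"
    by (rule emeasure_U01_seq_comb_seq[symmetric]) measurable
  finally show ?thesis
    using q by (simp add: U01_seq.P.emeasure_eq_measure ennreal_mult[symmetric])
qed

(* With probability >= q a visit at time r is followed by no visit after time r + N, and a
   path lies in at most N of these last_visit events, so the visit probabilities are summable. *)
lemma AE_eventually_abs_traj_gt:
  assumes bounded: "bounded_steps f c x0" and "uniform_escape f c K"
  shows "AE w in U01_seq. eventually (\<lambda>t. K < \<bar>traj f x0 w t\<bar>) sequentially"
proof -
  obtain N q where q: "0 < q"
    and escape: "\<And>x. bounded_steps f c x \<Longrightarrow> q \<le> measure U01_seq {w. \<forall>t\<ge>N. K < \<bar>traj f x w t\<bar>}"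
    using \<open>uniform_escape f c K\<close> unfolding uniform_escape_def by blast
  define visit where "visit r = {w. \<bar>traj f x0 w r\<bar> \<le> K}" for r
  define last_visit
    where "last_visit r = {w. \<bar>traj f x0 w r\<bar> \<le> K \<and> (\<forall>t\<ge>N. K < \<bar>traj f x0 w (r + t)\<bar>)}"
    for r
  have [measurable]: "visit r \<in> sets U01_seq" "last_visit r \<in> sets U01_seq" for r
    unfolding visit_def last_visit_def by measurable
  have "(\<Sum>r<n. measure U01_seq (visit r)) \<le> N / q" for n
  proof -
    have "q * (\<Sum>r<n. measure U01_seq (visit r)) \<le> (\<Sum>r<n. measure U01_seq (last_visit r))"
      unfolding sum_distrib_left visit_def last_visit_def
      using prob_last_visit_ge[OF bounded escape] q by (intro sum_mono) auto
    also have "\<dots> \<le> N"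
      by (intro U01_seq.P.sum_prob_le_if_card_le card_sparse_le) (auto simp: last_visit_def)
    finally show ?thesis
      using q by (simp add: field_simps)
  qed
  then have "summable (\<lambda>r. measure U01_seq (visit r))"
    by (intro summableI_nonneg_bounded) auto
  then have "AE w in U01_seq. eventually (\<lambda>r. w \<in> space U01_seq - visit r) sequentially"
    by (intro borel_cantelli_AE1) (auto simp: U01_seq.P.emeasure_eq_measure)
  then show ?thesis
    by (simp add: visit_def not_le)
qed

lemma bounded_steps_if_distr:
  assumes X: "X \<in> measurable M U01_seq" "distr M U01_seq X = U01_seq"
    and "AE \<omega> in M. \<forall>t. \<bar>f (traj f x (X \<omega>) t) (X \<omega> t)\<bar> \<le> c"
  shows "bounded_steps f c x"
proof -
  have "{w \<in> space U01_seq. \<forall>t. \<bar>f (traj f x w t) (w t)\<bar> \<le> c} \<in> sets U01_seq"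
    by measurable
  with assms(3) have "AE w in distr M U01_seq X. \<forall>t. \<bar>f (traj f x w t) (w t)\<bar> \<le> c"
    by (simp add: AE_distr_iff[OF X(1)])
  then show ?thesis
    unfolding bounded_steps_def X(2) .
qed

lemma AE_traj_tendsto_infinity:
  assumes bounded: "bounded_steps f c x0"
    and escape: "\<And>K. uniform_escape f c K"
  shows "AE w in U01_seq. filterlim (traj f x0 w) at_top sequentially
                        \<or> filterlim (traj f x0 w) at_bot sequentially"
proof -
  have "AE w in U01_seq. eventually (\<lambda>t. real K < \<bar>traj f x0 w t\<bar>) sequentially" for K :: nat
    by (rule AE_eventually_abs_traj_gt[OF bounded escape])
  then have "AE w in U01_seq. \<forall>K::nat. eventually (\<lambda>t. real K < \<bar>traj f x0 w t\<bar>) sequentially"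
    by (simp add: AE_all_countable)
  then have "AE w in U01_seq. filterlim (\<lambda>t. \<bar>traj f x0 w t\<bar>) at_top sequentially"
  proof (rule eventually_mono)
    fix w assume escapes: "\<forall>K::nat. eventually (\<lambda>t. real K < \<bar>traj f x0 w t\<bar>) sequentially"
    show "filterlim (\<lambda>t. \<bar>traj f x0 w t\<bar>) at_top sequentially"
      unfolding filterlim_at_top
    proof
      fix Z :: real
      obtain K :: nat where "Z \<le> real K"
        using real_arch_simple by blast
      from escapes have "eventually (\<lambda>t. real K < \<bar>traj f x0 w t\<bar>) sequentially"
        by blast
      then show "eventually (\<lambda>t. Z \<le> \<bar>traj f x0 w t\<bar>) sequentially"
        by (rule eventually_mono) (use \<open>Z \<le> real K\<close> in linarith)
    qed
  qed
  moreover have "AE w in U01_seq. \<forall>t. \<bar>traj f x0 w (Suc t) - traj f x0 w t\<bar> \<le> c"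
    using bounded unfolding bounded_steps_def by simp
  ultimately show ?thesis
    by eventually_elim (rule filterlim_at_top_or_at_bot_if_abs[where c=c], auto)
qed

end

theorem theorem2:
  fixes M :: "'a measure" and f :: "real \<Rightarrow> real \<Rightarrow> real" and m0 :: real
    and \<xi> :: "nat \<Rightarrow> 'a \<Rightarrow> real"
  assumes "prob_space M"
    and f_meas: "(\<lambda>(m, u). f m u) \<in> borel_measurable borel"
    and xi_rv: "\<And>t. \<xi> t \<in> borel_measurable M"
    and xi_indep: "prob_space.indep_vars M (\<lambda>_. borel) \<xi> UNIV"
    and xi_unif: "\<And>t. distr M borel (\<xi> t) = U01"
    and F_cont: "\<And>m. isCont (\<lambda>p. cdfF f (fst p) (snd p)) (m, 0)"
    and m_circ: "\<exists>mc. (\<forall>m\<ge>mc. cdfF f m 0 < 1) \<and> (\<forall>m\<le>mc. cdfF f m 0 > 0)"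
    and bounded: "\<exists>c. \<forall>t. AE \<omega> in M. \<bar>proc f m0 \<xi> (Suc t) \<omega> - proc f m0 \<xi> t \<omega>\<bar> \<le> c"
    and drift: "\<exists>\<epsilon>>0. (\<forall>\<^sub>F m in at_top. fbar f m > \<epsilon>) \<and> (\<forall>\<^sub>F m in at_bot. fbar f m < - \<epsilon>)"
  shows "AE \<omega> in M. filterlim (\<lambda>t. proc f m0 \<xi> t \<omega>) at_top sequentially
                  \<or> filterlim (\<lambda>t. proc f m0 \<xi> t \<omega>) at_bot sequentially"
proof -
  interpret measurable_step f
    by unfold_locales (rule f_meas)
  define X where "X \<omega> = (\<lambda>t. \<xi> t \<omega>)" for \<omega>
  have X: "X \<in> measurable M U01_seq" "distr M U01_seq X = U01_seq"
    using distr_U01_seq_iid[OF assms(1) xi_rv xi_indep xi_unif] by (simp_all add: X_def[abs_def])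
  obtain c0 where "\<forall>t. AE \<omega> in M. \<bar>proc f m0 \<xi> (Suc t) \<omega> - proc f m0 \<xi> t \<omega>\<bar> \<le> c0"
    using bounded by blast
  then have "AE \<omega> in M. \<forall>t. \<bar>proc f m0 \<xi> (Suc t) \<omega> - proc f m0 \<xi> t \<omega>\<bar> \<le> c0"
    by (simp add: AE_all_countable)
  define c where "c = max c0 1"
  then have "AE \<omega> in M. \<forall>t. \<bar>f (traj f m0 (X \<omega>) t) (X \<omega> t)\<bar> \<le> c"
    using \<open>AE \<omega> in M. _\<close> by (elim eventually_mono) (simp add: proc_eq_traj X_def le_max_iff_disj)
  then have steps: "bounded_steps f c m0"
    by (rule bounded_steps_if_distr[OF X])
  obtain \<epsilon> mc where "0 < \<epsilon>" "\<forall>\<^sub>F m in at_top. \<epsilon> < fbar f m" "\<forall>\<^sub>F m in at_bot. fbar f m < - \<epsilon>"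
    and "\<forall>m\<ge>mc. cdfF f m 0 < 1" "\<forall>m\<le>mc. 0 < cdfF f m 0"
    using drift m_circ by blast
  then have "AE w in U01_seq. filterlim (traj f m0 w) at_top sequentially
      \<or> filterlim (traj f m0 w) at_bot sequentially"
    by (intro AE_traj_tendsto_infinity[OF steps] uniform_escape_if_drift[OF _ _ _ _ F_cont])
      (auto simp: c_def)
  then have "AE w in distr M U01_seq X. filterlim (traj f m0 w) at_top sequentially
      \<or> filterlim (traj f m0 w) at_bot sequentially"
    by (simp only: X(2))
  from AE_distrD[OF X(1) this] show ?thesis
    by (simp add: proc_eq_traj X_def)
qed

end
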